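(* Let $S\subseteq\mathbb{S}$ be nonempty. The Cournot game on $S$ has a unique pure Nash equilibrium, given for each $i\in S$ by $$\hat q_i=\frac{W(e^{\theta_i-1})}{1+\sum_{j\in S}W(e^{\theta_j-1})},\qquad \hat p_i=1+W(e^{\theta_i-1}).$$ Consequently, writing $w_i=W(e^{\theta_i-1})$, the equilibrium social welfare and revenue are $$\widehat{sw}(S)=\log\Big(1+\sum_{i\in S}w_i\Big)+\frac{\sum_{i\in S}(w_i^2+w_i)}{1+\sum_{i\in S}w_i},\qquad \widehat{re}(S)=\frac{\sum_{i\in S}(w_i^2+w_i)}{1+\sum_{i\in S}w_i}.$$
   Context: Sellers $\mathbb{S}=\{1,\dots,n\}$ with product qualities $\theta_i\ge0$. Cournot game on a displayed set $S$: seller $i\in S$ chooses a demand (quantity) $q_i$; the joint profile must lie in $\mathcal Q=\{\boldsymbol q:\ 0\le\sum_{i\in\bar S}q_i\le \frac{\sum_{i\in\bar S}e^{\theta_i}}{1+\sum_{i\in\bar S}e^{\theta_i}}\ \forall\bar S\subseteq S\}$; the resulting price is $p_i(\boldsymbol q)=\theta_i+\log(1-\sum_{j\in S}q_j)-\log q_i$ (the inverse of the MNL demand $q_i=e^{\theta_i-p_i}/(1+\sum_{j\in S}e^{\theta_j-p_j})$), and seller $i$'s payoff is $r_i(\boldsymbol q)=p_i(\boldsymbol q)q_i$. Social welfare is $\log(1+\sum_{j\in S}e^{\theta_j-p_j})+\sum_{i\in S}p_iq_i$ and revenue is $\sum_{i\in S}p_iq_i$. $W$ is the Lambert W function on $[0,\infty)$: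 $W(x)e^{W(x)}=x$. *)

theory Defs
  imports Complex_Main
begin

definition lambertW :: "real \<Rightarrow> real" where
  "lambertW x = (THE w. 0 \<le> w \<and> w * exp w = x)"

definition feasible :: "(nat \<Rightarrow> real) \<Rightarrow> nat set \<Rightarrow> (nat \<Rightarrow> real) set" where
  "feasible \<theta> S = {q. \<forall>S'. S' \<subseteq> S \<longrightarrow>
      0 \<le> (\<Sum>i\<in>S'. q i) \<and>
      (\<Sum>i\<in>S'. q i) \<le> (\<Sum>i\<in>S'. exp (\<theta> i)) / (1 + (\<Sum>i\<in>S'. exp (\<theta> i)))}"

text \<open>Inverse MNL price p_i(q) = theta_i + log(1 - sum_j q_j) - log q_i.\<close>
definition price :: "(nat \<Rightarrow> real) \<Rightarrow> nat set \<Rightarrow> (nat \<Rightarrow> real) \<Rightarrow> nat \<Rightarrow> real" where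
  "price \<theta> S q i = \<theta> i + ln (1 - (\<Sum>j\<in>S. q j)) - ln (q i)"

text \<open>Payoff r_i(q) = p_i(q) q_i (equals 0 when q_i = 0, the continuous extension).\<close>
definition payoff :: "(nat \<Rightarrow> real) \<Rightarrow> nat set \<Rightarrow> (nat \<Rightarrow> real) \<Rightarrow> nat \<Rightarrow> real" where
  "payoff \<theta> S q i = price \<theta> S q i * q i"

definition cournot_NE :: "(nat \<Rightarrow> real) \<Rightarrow> nat set \<Rightarrow> (nat \<Rightarrow> real) \<Rightarrow> bool" where
  "cournot_NE \<theta> S q \<longleftrightarrow> q \<in> feasible \<theta> S \<and>
     (\<forall>i\<in>S. \<forall>q'\<in>feasible \<theta> S. (\<forall>j\<in>S. j \<noteq> i \<longrightarrow> q' j = q j) \<longrightarrow>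
        payoff \<theta> S q' i \<le> payoff \<theta> S q i)"

definition revenue :: "(nat \<Rightarrow> real) \<Rightarrow> nat set \<Rightarrow> (nat \<Rightarrow> real) \<Rightarrow> real" where
  "revenue \<theta> S q = (\<Sum>i\<in>S. price \<theta> S q i * q i)"

definition social_welfare :: "(nat \<Rightarrow> real) \<Rightarrow> nat set \<Rightarrow> (nat \<Rightarrow> real) \<Rightarrow> real" where
  "social_welfare \<theta> S q =
     ln (1 + (\<Sum>j\<in>S. exp (\<theta> j - price \<theta> S q j))) + (\<Sum>i\<in>S. price \<theta> S q i * q i)"

end

theory Submission
  imports Defs
begin

text \<open>
  Fix the demands of all sellers but \<open>i\<close>. Seller \<open>i\<close>'s payoff then depends on them only
  through the residual mass \<open>u = 1 - \<Sum>\<^sub>j\<^sub>\<noteq>\<^sub>i q\<^sub>j\<close>, and as a function of its own demand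
  \<open>x \<in> [0, u)\<close> it equals \<open>(\<theta>\<^sub>i + ln (u - x) - ln x) x\<close>. With \<open>w = W(e\<^bsup>\<theta>\<^sub>i - 1\<^esup>)\<close>, i.e.
  \<open>ln w + w = \<theta>\<^sub>i - 1\<close>, the inequality \<open>ln t \<le> t - 1\<close> shows that this is at most \<open>w u\<close>, with
  equality exactly at the best response \<open>x = w u / (1 + w)\<close>, and the function is strictly
  increasing below that point.

  Lowering one's demand is always feasible, so at an equilibrium every seller is at or below
  its best response, i.e. \<open>q\<^sub>i \<le> w\<^sub>i (1 - \<Sum> q)\<close>. Summed over any \<open>A \<subseteq> S\<close> this gives
  \<open>\<Sum>\<^sub>A q \<le> \<Sum>\<^sub>A w / (1 + \<Sum>\<^sub>A w)\<close>, strictly below the capacity of \<open>A\<close> since \<open>w\<^sub>i < e\<^bsup>\<theta>\<^sub>i\<^esup>\<close>. So no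
  constraint binds, every seller can also raise its demand a little, and therefore sits exactly
  at its best response. Summing \<open>q\<^sub>i = w\<^sub>i (1 - \<Sum> q)\<close> gives \<open>1 - \<Sum> q = 1 / (1 + \<Sum> w)\<close>.
\<close>

lemma lambertW_eq:
  assumes "0 \<le> x"
  shows "0 \<le> lambertW x" and "lambertW x * exp (lambertW x) = x"
proof -
  have "\<exists>v. 0 \<le> v \<and> v \<le> x \<and> v * exp v = x"
  proof (rule IVT)
    show "0 * exp 0 \<le> x" and "0 \<le> x" using assms by simp_all
    show "x \<le> x * exp x" using assms by (simp add: mult_le_cancel_left1)
    show "\<forall>v. 0 \<le> v \<and> v \<le> x \<longrightarrow> isCont (\<lambda>v. v * exp v) v"
      by (intro allI impI continuous_intros)
  qed
  then obtain v where v: "0 \<le> v" "v * exp v = x" by blast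
  have "lambertW x = v"
    unfolding lambertW_def
  proof (rule the_equality)
    fix u assume u: "0 \<le> u \<and> u * exp u = x"
    have "u * exp u < v * exp v" if "0 \<le> u" "u < v" for u v :: real
      using that by (intro mult_strict_mono) auto
    with u v show "u = v" by (metis linorder_neqE_linordered_idom less_irrefl)
  qed (use v in simp)
  with v show "0 \<le> lambertW x" and "lambertW x * exp (lambertW x) = x" by simp_all
qed

lemma lambertW_pos: "0 < x \<Longrightarrow> 0 < lambertW x"
  using lambertW_eq[of x] by (cases "lambertW x = 0") auto

lemma ln_lambertW_exp: "ln (lambertW (exp c)) + lambertW (exp c) = c"
proof -
  have "ln (lambertW (exp c) * exp (lambertW (exp c))) = c"
    using lambertW_eq(2)[of "exp c"] by simp
  then show ?thesis
    using lambertW_pos[of "exp c"] by (simp add: ln_mult)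
qed

lemma exp_diff_eq_of_ln_add_eq:
  fixes w :: real
  assumes "0 < w" "ln w + w = c"
  shows "exp (c - w) = w"
  using assms by (metis add_diff_cancel_right' exp_ln)

lemma less_exp_of_ln_add_eq:
  fixes w :: real
  assumes "0 < w" "ln w + w = c - 1"
  shows "w < exp c"
proof -
  have "w = exp (c - 1 - w)" using exp_diff_eq_of_ln_add_eq[OF assms] by simp
  also have "\<dots> < exp c" using assms(1) by simp
  finally show ?thesis .
qed

lemma frac_one_plus_le: "0 \<le> x \<Longrightarrow> x \<le> y \<Longrightarrow> x / (1 + x) \<le> y / (1 + (y::real))"
  by (simp add: divide_simps algebra_simps)

lemma frac_one_plus_less: "0 \<le> x \<Longrightarrow> x < y \<Longrightarrow> x / (1 + x) < y / (1 + (y::real))"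
  by (simp add: divide_simps algebra_simps)

lemma sum_fun_upd:
  fixes f :: "'a \<Rightarrow> 'b::ab_group_add"
  assumes "finite A"
  shows "sum (f(i := x)) A = sum f A + (if i \<in> A then x - f i else 0)"
proof (cases "i \<in> A")
  case True
  have "sum (f(i := x)) A = x + sum f (A - {i})"
    using assms True by (simp add: sum.remove)
  also have "\<dots> = sum f A + (x - f i)"
    using assms True by (simp add: sum.remove algebra_simps)
  finally show ?thesis using True by simp
next
  case False
  then have "sum (f(i := x)) A = sum f A" by (intro sum.cong) auto
  with False show ?thesis by simp
qed

definition profit :: "real \<Rightarrow> real \<Rightarrow> real \<Rightarrow> real" where
  "profit c u x = (c + ln (u - x) - ln x) * x"

lemma profit_gap:
  assumes "0 < w" "ln w + w = c - 1" "0 < x" "x < u"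
  defines "t \<equiv> w * (u - x) / x"
  shows "w * u - profit c u x = x * (t - 1 - ln t)"
proof -
  have "ln t = ln w + ln (u - x) - ln x"
    using assms by (simp add: ln_div ln_mult)
  with assms(2) have "c + ln (u - x) - ln x = 1 + w + ln t" by simp
  then have "profit c u x = x * (1 + w + ln t)"
    unfolding profit_def by simp
  moreover have "x * t = w * (u - x)"
    using assms(3) unfolding t_def by simp
  ultimately show ?thesis by (simp add: algebra_simps)
qed

lemma profit_le_max:
  assumes "0 < w" "ln w + w = c - 1" "0 \<le> x" "x < u"
  shows "profit c u x \<le> w * u"
proof (cases "x = 0")
  case False
  define t where "t = w * (u - x) / x"
  with False assms have "0 < x" "0 < t" by simp_all
  then have "0 \<le> x * (t - 1 - ln t)"
    using ln_le_minus_one[of t] by simp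
  with profit_gap[OF assms(1,2) \<open>0 < x\<close> assms(4)] show ?thesis
    unfolding t_def by simp
qed (use assms in \<open>simp add: profit_def\<close>)

lemma profit_eq_max_iff:
  assumes "0 < w" "ln w + w = c - 1" "0 \<le> x" "x < u"
  shows "profit c u x = w * u \<longleftrightarrow> x = w * u / (1 + w)"
proof (cases "x = 0")
  case True
  with assms show ?thesis by (simp add: profit_def)
next
  case False
  define t where "t = w * (u - x) / x"
  from False assms have "0 < x" "0 < t" by (simp_all add: t_def)
  have "profit c u x = w * u \<longleftrightarrow> x * (t - 1 - ln t) = 0"
    using profit_gap[OF assms(1,2) \<open>0 < x\<close> assms(4)] unfolding t_def by linarith
  also have "\<dots> \<longleftrightarrow> ln t = t - 1"
    using \<open>0 < x\<close> by auto
  also have "\<dots> \<longleftrightarrow> t = 1"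
    using ln_eq_minus_one[OF \<open>0 < t\<close>] by auto
  also have "\<dots> \<longleftrightarrow> x = w * u / (1 + w)"
    using \<open>0 < x\<close> assms(1) unfolding t_def by (auto simp: field_simps)
  finally show ?thesis .
qed

lemma bounds_below_best_response:
  fixes w x u :: real
  assumes "0 < w" "0 < x" "x \<le> w * u / (1 + w)"
  shows "x < u" and "x / (u - x) \<le> w"
proof -
  have "0 < 1 + w" using assms(1) by simp
  with assms(3) have "x * (1 + w) \<le> w * u" by (simp add: pos_le_divide_eq)
  then have le: "x \<le> w * (u - x)" by (simp add: algebra_simps)
  with assms(2) have "0 < w * (u - x)" by linarith
  with assms(1) have "0 < u - x" by (simp add: zero_less_mult_iff)
  then show "x < u" by simp
  from le \<open>0 < u - x\<close> show "x / (u - x) \<le> w" by (simp add: pos_divide_le_eq mult.commute)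
qed

lemma profit_derivative:
  assumes "0 < x" "x < u"
  shows "(profit c u has_real_derivative c - 1 + ln (u - x) - ln x - x / (u - x)) (at x)"
proof -
  have "((\<lambda>x. (c + ln (u - x) - ln x) * x) has_real_derivative
      (0 + (- 1 / (u - x)) - 1 / x) * x + (c + ln (u - x) - ln x)) (at x)"
    using assms by (auto intro!: derivative_eq_intros)
  moreover have "(0 + (- 1 / (u - x)) - 1 / x) * x + (c + ln (u - x) - ln x)
      = c - 1 + ln (u - x) - ln x - x / (u - x)"
    using assms by (simp add: field_simps)
  ultimately show ?thesis unfolding profit_def [abs_def] by (simp only:)
qed

lemma profit_strict_mono:
  assumes "0 < w" "ln w + w = c - 1" "0 \<le> a" "a < b" "b \<le> w * u / (1 + w)"
  shows "profit c u a < profit c u b"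
proof (cases "a = 0")
  case True
  have "0 < b" using assms by simp
  note b = bounds_below_best_response[OF assms(1) this assms(5)]
  have "ln (b / (u - b)) \<le> ln w"
    using b assms(1) \<open>0 < b\<close> by simp
  then have "0 < (c - ln (b / (u - b))) * b"
    using assms(1,2) \<open>0 < b\<close> by simp
  moreover have "c - ln (b / (u - b)) = c + ln (u - b) - ln b"
    using \<open>0 < b\<close> b(1) by (simp add: ln_div)
  ultimately show ?thesis
    using True by (simp add: profit_def)
next
  case False
  have "0 < a" using False assms(3) by simp
  have "b < u" using bounds_below_best_response(1)[OF assms(1) _ assms(5)] \<open>0 < a\<close> assms(4) by simp
  show ?thesis
  proof (rule DERIV_pos_imp_increasing_open[OF assms(4)])
    fix x assume x: "a < x" "x < b"
    then have "0 < x" "x < u" using \<open>0 < a\<close> \<open>b < u\<close> by simp_all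
    have "x / (u - x) < w"
    proof -
      have "0 < 1 + w" "x < w * u / (1 + w)" using x assms(1,5) by simp_all
      then have "x < w * (u - x)" by (simp add: pos_less_divide_eq algebra_simps)
      with \<open>x < u\<close> show ?thesis by (simp add: pos_divide_less_eq mult.commute)
    qed
    have "ln (x / (u - x)) = ln x - ln (u - x)"
      using \<open>0 < x\<close> \<open>x < u\<close> by (simp add: ln_div)
    moreover have "ln (x / (u - x)) < ln w"
      using \<open>x / (u - x) < w\<close> \<open>0 < x\<close> \<open>x < u\<close> assms(1)
      by (intro ln_less_cancel_iff[THEN iffD2]) simp_all
    ultimately have "0 < c - 1 + ln (u - x) - ln x - x / (u - x)"
      using assms(2) \<open>x / (u - x) < w\<close> by linarith
    with profit_derivative[OF \<open>0 < x\<close> \<open>x < u\<close>]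
    show "\<exists>y. (profit c u has_real_derivative y) (at x) \<and> 0 < y" by blast
  next
    show "continuous_on {a..b} (profit c u)"
    proof (rule DERIV_atLeastAtMost_imp_continuous_on)
      fix x assume "a \<le> x" "x \<le> b"
      with \<open>0 < a\<close> \<open>b < u\<close> have "0 < x" "x < u" by simp_all
      then show "\<exists>y. (profit c u has_real_derivative y) (at x)"
        using profit_derivative by blast
    qed
  qed
qed

definition demand_cap :: "(nat \<Rightarrow> real) \<Rightarrow> nat set \<Rightarrow> real" where
  "demand_cap \<theta> A = (\<Sum>i\<in>A. exp (\<theta> i)) / (1 + (\<Sum>i\<in>A. exp (\<theta> i)))"

lemma feasible_iff:
  "q \<in> feasible \<theta> S \<longleftrightarrow> (\<forall>A\<subseteq>S. 0 \<le> sum q A \<and> sum q A \<le> demand_cap \<theta> A)"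
  unfolding feasible_def demand_cap_def by simp

lemma demand_cap_less_one: "demand_cap \<theta> A < 1"
proof -
  have "0 \<le> (\<Sum>i\<in>A. exp (\<theta> i))" by (simp add: sum_nonneg)
  then show ?thesis unfolding demand_cap_def by simp
qed

lemma feasible_nonneg:
  assumes "q \<in> feasible \<theta> S" "i \<in> S"
  shows "0 \<le> q i"
proof -
  have "0 \<le> sum q {i}" using assms unfolding feasible_iff by blast
  then show ?thesis by simp
qed

lemma feasible_sum_less_one:
  assumes "q \<in> feasible \<theta> S"
  shows "sum q S < 1"
proof -
  have "sum q S \<le> demand_cap \<theta> S" using assms unfolding feasible_iff by blast
  with demand_cap_less_one[of \<theta> S] show ?thesis by linarith
qed

lemma feasible_fun_upd:
  assumes "q \<in> feasible \<theta> S" "finite S" "0 \<le> x"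
    and "\<And>A. A \<subseteq> S \<Longrightarrow> i \<in> A \<Longrightarrow> sum q A + (x - q i) \<le> demand_cap \<theta> A"
  shows "q(i := x) \<in> feasible \<theta> S"
  unfolding feasible_iff
proof (intro allI impI conjI)
  fix A assume "A \<subseteq> S"
  then have "finite A" using assms(2) finite_subset by blast
  show "0 \<le> sum (q(i := x)) A"
    using \<open>A \<subseteq> S\<close> assms(1,3) feasible_nonneg by (intro sum_nonneg) auto
  have "sum q A \<le> demand_cap \<theta> A"
    using assms(1) \<open>A \<subseteq> S\<close> unfolding feasible_iff by blast
  then show "sum (q(i := x)) A \<le> demand_cap \<theta> A"
    using sum_fun_upd[OF \<open>finite A\<close>, of q i x] assms(4)[OF \<open>A \<subseteq> S\<close>] by simp
qed

lemma feasible_fun_upd_decrease: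
  assumes "q \<in> feasible \<theta> S" "finite S" "0 \<le> x" "x \<le> q i"
  shows "q(i := x) \<in> feasible \<theta> S"
  using assms by (intro feasible_fun_upd) (auto simp: feasible_iff)

lemma feasible_fun_upd_increase:
  assumes "q \<in> feasible \<theta> S" "finite S" "i \<in> S"
    and slack: "\<And>A. A \<subseteq> S \<Longrightarrow> i \<in> A \<Longrightarrow> sum q A < demand_cap \<theta> A"
  obtains \<delta> where "0 < \<delta>" "\<And>x. q i \<le> x \<Longrightarrow> x \<le> q i + \<delta> \<Longrightarrow> q(i := x) \<in> feasible \<theta> S"
proof -
  define gaps where "gaps = (\<lambda>A. demand_cap \<theta> A - sum q A) ` {A. A \<subseteq> S \<and> i \<in> A}"
  have "finite gaps" "gaps \<noteq> {}"
    unfolding gaps_def using assms(2,3) by auto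
  moreover have "\<forall>g\<in>gaps. 0 < g"
    unfolding gaps_def using slack by auto
  ultimately have "0 < Min gaps" by simp
  moreover have "q(i := x) \<in> feasible \<theta> S" if "q i \<le> x" "x \<le> q i + Min gaps" for x
  proof (rule feasible_fun_upd[OF assms(1,2)])
    show "0 \<le> x" using that feasible_nonneg[OF assms(1,3)] by simp
    fix A assume "A \<subseteq> S" "i \<in> A"
    then have "Min gaps \<le> demand_cap \<theta> A - sum q A"
      using \<open>finite gaps\<close> unfolding gaps_def by (intro Min_le) auto
    with that show "sum q A + (x - q i) \<le> demand_cap \<theta> A" by simp
  qed
  ultimately show ?thesis using that by blast
qed

definition residual_demand :: "nat set \<Rightarrow> (nat \<Rightarrow> real) \<Rightarrow> nat \<Rightarrow> real" where
  "residual_demand S q i = 1 - (\<Sum>j\<in>S - {i}. q j)"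

lemma residual_demand_eq:
  "finite S \<Longrightarrow> i \<in> S \<Longrightarrow> residual_demand S q i = 1 - sum q S + q i"
  unfolding residual_demand_def by (simp add: sum.remove)

lemma residual_demand_cong:
  "\<forall>j\<in>S. j \<noteq> i \<longrightarrow> q' j = q j \<Longrightarrow> residual_demand S q' i = residual_demand S q i"
  unfolding residual_demand_def by (auto intro: sum.cong)

lemma payoff_eq_profit:
  assumes "finite S" "i \<in> S"
  shows "payoff \<theta> S q i = profit (\<theta> i) (residual_demand S q i) (q i)"
  using assms unfolding payoff_def price_def profit_def residual_demand_eq[OF assms]
  by (simp add: algebra_simps)

lemma cournot_NE_profit_le:
  assumes "cournot_NE \<theta> S q" "finite S" "i \<in> S" "q(i := x) \<in> feasible \<theta> S"
  shows "profit (\<theta> i) (residual_demand S q i) x \<le> profit (\<theta> i) (residual_demand S q i) (q i)"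
proof -
  have "payoff \<theta> S (q(i := x)) i \<le> payoff \<theta> S q i"
    using assms unfolding cournot_NE_def by auto
  moreover have "residual_demand S (q(i := x)) i = residual_demand S q i"
    by (rule residual_demand_cong) simp
  ultimately show ?thesis
    using payoff_eq_profit[OF assms(2,3)] by (metis fun_upd_same)
qed

definition equilibrium_demand :: "nat set \<Rightarrow> (nat \<Rightarrow> real) \<Rightarrow> nat \<Rightarrow> real" where
  "equilibrium_demand S w i = w i / (1 + sum w S)"

lemma sum_equilibrium_demand:
  "sum (equilibrium_demand S w) A = sum w A / (1 + sum w S)"
  unfolding equilibrium_demand_def by (simp add: sum_divide_distrib)

lemma equilibrium_demand_feasible:
  assumes "finite S" and w: "\<And>j. j \<in> S \<Longrightarrow> 0 \<le> w j \<and> w j \<le> exp (\<theta> j)"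
  shows "equilibrium_demand S w \<in> feasible \<theta> S"
  unfolding feasible_iff sum_equilibrium_demand
proof (intro allI impI conjI)
  fix A assume "A \<subseteq> S"
  have "0 \<le> sum w A" "sum w A \<le> sum w S"
    using \<open>A \<subseteq> S\<close> \<open>finite S\<close> w by (auto intro!: sum_nonneg sum_mono2)
  then show "0 \<le> sum w A / (1 + sum w S)" by simp
  have "sum w A / (1 + sum w S) \<le> sum w A / (1 + sum w A)"
    using \<open>0 \<le> sum w A\<close> \<open>sum w A \<le> sum w S\<close> by (intro divide_left_mono) auto
  also have "\<dots> \<le> demand_cap \<theta> A"
    unfolding demand_cap_def
    using \<open>0 \<le> sum w A\<close> \<open>A \<subseteq> S\<close> w by (intro frac_one_plus_le sum_mono) auto
  finally show "sum w A / (1 + sum w S) \<le> demand_cap \<theta> A" .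
qed

lemma residual_equilibrium_demand:
  assumes "finite S" "i \<in> S" "0 \<le> sum w S"
  shows "residual_demand S (equilibrium_demand S w) i = (1 + w i) / (1 + sum w S)"
  using assms unfolding residual_demand_eq[OF assms(1,2)] sum_equilibrium_demand
  by (simp add: equilibrium_demand_def field_simps)

lemma price_equilibrium_demand:
  assumes "finite S" "i \<in> S" "0 \<le> sum w S" "0 < w i" "ln (w i) + w i = \<theta> i - 1"
  shows "price \<theta> S (equilibrium_demand S w) i = 1 + w i"
proof -
  have "1 - sum w S / (1 + sum w S) = 1 / (1 + sum w S)"
    using assms(3) by (simp add: field_simps)
  then have "price \<theta> S (equilibrium_demand S w) i
      = \<theta> i + ln (1 / (1 + sum w S)) - ln (w i / (1 + sum w S))"
    unfolding price_def sum_equilibrium_demand by (simp add: equilibrium_demand_def)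
  also have "\<dots> = \<theta> i - ln (w i)"
    using assms(3,4) by (simp add: ln_div)
  finally show ?thesis using assms(5) by simp
qed

lemma cournot_NE_equilibrium_demand:
  assumes "finite S" and w: "\<And>j. j \<in> S \<Longrightarrow> 0 < w j \<and> ln (w j) + w j = \<theta> j - 1"
  shows "cournot_NE \<theta> S (equilibrium_demand S w)"
  unfolding cournot_NE_def
proof (intro conjI ballI impI)
  show feas: "equilibrium_demand S w \<in> feasible \<theta> S"
  proof (rule equilibrium_demand_feasible[OF \<open>finite S\<close>])
    fix j assume "j \<in> S"
    with w have "0 < w j" "ln (w j) + w j = \<theta> j - 1" by simp_all
    with less_exp_of_ln_add_eq show "0 \<le> w j \<and> w j \<le> exp (\<theta> j)" by force
  qed
  have "0 \<le> sum w S" using w by (simp add: sum_nonneg less_imp_le)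
  fix i q' assume "i \<in> S" "q' \<in> feasible \<theta> S"
    and agree: "\<forall>j\<in>S. j \<noteq> i \<longrightarrow> q' j = equilibrium_demand S w j"
  define u where "u = residual_demand S (equilibrium_demand S w) i"
  have u: "u = (1 + w i) / (1 + sum w S)"
    unfolding u_def using \<open>finite S\<close> \<open>i \<in> S\<close> \<open>0 \<le> sum w S\<close>
    by (rule residual_equilibrium_demand)
  have "u = residual_demand S q' i"
    unfolding u_def using agree by (rule residual_demand_cong[symmetric])
  also have "\<dots> = 1 - sum q' S + q' i"
    using \<open>finite S\<close> \<open>i \<in> S\<close> by (rule residual_demand_eq)
  finally have "q' i < u"
    using feasible_sum_less_one[OF \<open>q' \<in> feasible \<theta> S\<close>] by simp
  have "payoff \<theta> S q' i = profit (\<theta> i) u (q' i)"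
    unfolding payoff_eq_profit[OF \<open>finite S\<close> \<open>i \<in> S\<close>] \<open>u = residual_demand S q' i\<close> ..
  also have "\<dots> \<le> w i * u"
    using profit_le_max w[OF \<open>i \<in> S\<close>] feasible_nonneg[OF \<open>q' \<in> feasible \<theta> S\<close> \<open>i \<in> S\<close>] \<open>q' i < u\<close>
    by blast
  also have "\<dots> = profit (\<theta> i) u (equilibrium_demand S w i)"
  proof -
    have "equilibrium_demand S w i = w i * u / (1 + w i)"
      unfolding u equilibrium_demand_def using w[OF \<open>i \<in> S\<close>] \<open>0 \<le> sum w S\<close>
      by (simp add: add_pos_nonneg)
    moreover have "0 \<le> equilibrium_demand S w i" "equilibrium_demand S w i < u"
      using feasible_nonneg[OF feas \<open>i \<in> S\<close>] \<open>0 \<le> sum w S\<close>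
      unfolding u equilibrium_demand_def by (simp_all add: divide_strict_right_mono)
    ultimately show ?thesis
      using profit_eq_max_iff w[OF \<open>i \<in> S\<close>] by metis
  qed
  also have "\<dots> = payoff \<theta> S (equilibrium_demand S w) i"
    unfolding payoff_eq_profit[OF \<open>finite S\<close> \<open>i \<in> S\<close>] u_def ..
  finally show "payoff \<theta> S q' i \<le> payoff \<theta> S (equilibrium_demand S w) i" .
qed

lemma cournot_NE_le_best_response:
  assumes NE: "cournot_NE \<theta> S q" and "finite S" "i \<in> S"
    and w: "0 < w" "ln w + w = \<theta> i - 1"
  shows "q i \<le> w * (1 - sum q S)"
proof (rule ccontr)
  define u where "u = residual_demand S q i"
  define br where "br = w * u / (1 + w)"
  have feas: "q \<in> feasible \<theta> S" using NE unfolding cournot_NE_def by blast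
  have u: "u = 1 - sum q S + q i"
    unfolding u_def using \<open>finite S\<close> \<open>i \<in> S\<close> by (rule residual_demand_eq)
  have "0 \<le> q i" "sum q S < 1"
    using feas \<open>i \<in> S\<close> by (simp_all add: feasible_nonneg feasible_sum_less_one)
  then have "q i < u" "0 \<le> br"
    using w(1) unfolding u br_def by simp_all
  assume "\<not> q i \<le> w * (1 - sum q S)"
  then have "br < q i"
    using w(1) unfolding br_def u by (simp add: field_simps)
  have "profit (\<theta> i) u br \<le> profit (\<theta> i) u (q i)"
    unfolding u_def using NE \<open>finite S\<close> \<open>i \<in> S\<close>
    by (intro cournot_NE_profit_le feasible_fun_upd_decrease[OF feas]) (use \<open>0 \<le> br\<close> \<open>br < q i\<close> in auto)
  moreover have "profit (\<theta> i) u br = w * u"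
    using profit_eq_max_iff[OF w \<open>0 \<le> br\<close>] \<open>br < q i\<close> \<open>q i < u\<close> unfolding br_def by simp
  moreover have "profit (\<theta> i) u (q i) \<le> w * u"
    using profit_le_max[OF w \<open>0 \<le> q i\<close> \<open>q i < u\<close>] .
  ultimately have "profit (\<theta> i) u (q i) = w * u" by simp
  with profit_eq_max_iff[OF w \<open>0 \<le> q i\<close> \<open>q i < u\<close>] have "q i = br"
    unfolding br_def by simp
  with \<open>br < q i\<close> show False by simp
qed

lemma feasible_slack_below_best_response:
  assumes feas: "q \<in> feasible \<theta> S" and "finite S"
    and w: "\<And>j. j \<in> S \<Longrightarrow> 0 \<le> w j \<and> w j < exp (\<theta> j)"
    and br: "\<And>j. j \<in> S \<Longrightarrow> q j \<le> w j * (1 - sum q S)"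
    and A: "A \<subseteq> S" "A \<noteq> {}"
  shows "sum q A < demand_cap \<theta> A"
proof -
  have "finite A" using A(1) \<open>finite S\<close> finite_subset by blast
  have "0 \<le> sum w A" using A(1) w by (intro sum_nonneg) auto
  have "sum q A \<le> sum q S"
    using A(1) \<open>finite S\<close> feasible_nonneg[OF feas] by (intro sum_mono2) auto
  have "sum q A \<le> (\<Sum>j\<in>A. w j * (1 - sum q S))"
    using A(1) br by (intro sum_mono) auto
  also have "\<dots> = sum w A * (1 - sum q S)"
    by (simp add: sum_distrib_right)
  also have "\<dots> \<le> sum w A * (1 - sum q A)"
    using \<open>0 \<le> sum w A\<close> \<open>sum q A \<le> sum q S\<close> by (intro mult_left_mono) auto
  finally have "sum q A \<le> sum w A / (1 + sum w A)"
    using \<open>0 \<le> sum w A\<close> by (simp add: field_simps)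
  also have "\<dots> < demand_cap \<theta> A"
    unfolding demand_cap_def
  proof (rule frac_one_plus_less[OF \<open>0 \<le> sum w A\<close>])
    show "sum w A < (\<Sum>j\<in>A. exp (\<theta> j))"
      using \<open>finite A\<close> A w by (intro sum_strict_mono) auto
  qed
  finally show ?thesis .
qed

lemma cournot_NE_eq_best_response:
  assumes NE: "cournot_NE \<theta> S q" and "finite S" "i \<in> S"
    and w: "0 < w" "ln w + w = \<theta> i - 1"
    and slack: "\<And>A. A \<subseteq> S \<Longrightarrow> i \<in> A \<Longrightarrow> sum q A < demand_cap \<theta> A"
  shows "q i = w * (1 - sum q S)"
proof (rule ccontr)
  define u where "u = residual_demand S q i"
  define br where "br = w * u / (1 + w)"
  have feas: "q \<in> feasible \<theta> S" using NE unfolding cournot_NE_def by blast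
  have u: "u = 1 - sum q S + q i"
    unfolding u_def using \<open>finite S\<close> \<open>i \<in> S\<close> by (rule residual_demand_eq)
  assume "q i \<noteq> w * (1 - sum q S)"
  with cournot_NE_le_best_response[OF NE \<open>finite S\<close> \<open>i \<in> S\<close> w]
  have "q i < br"
    using w(1) unfolding br_def u by (simp add: field_simps)
  obtain \<delta> where "0 < \<delta>"
    and \<delta>: "\<And>x. q i \<le> x \<Longrightarrow> x \<le> q i + \<delta> \<Longrightarrow> q(i := x) \<in> feasible \<theta> S"
    using feasible_fun_upd_increase[OF feas \<open>finite S\<close> \<open>i \<in> S\<close> slack] by blast
  define b where "b = min (q i + \<delta>) br"
  have "q i < b" "b \<le> br"
    using \<open>0 < \<delta>\<close> \<open>q i < br\<close> unfolding b_def by simp_all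
  have "profit (\<theta> i) u b \<le> profit (\<theta> i) u (q i)"
    unfolding u_def using NE \<open>finite S\<close> \<open>i \<in> S\<close>
    by (rule cournot_NE_profit_le) (use \<delta> \<open>q i < b\<close> in \<open>simp add: b_def\<close>)
  moreover have "profit (\<theta> i) u (q i) < profit (\<theta> i) u b"
    using profit_strict_mono[OF w _ \<open>q i < b\<close>] \<open>b \<le> br\<close> feasible_nonneg[OF feas \<open>i \<in> S\<close>]
    unfolding br_def by simp
  ultimately show False by simp
qed

lemma cournot_NE_unique:
  assumes NE: "cournot_NE \<theta> S q" and "finite S"
    and w: "\<And>j. j \<in> S \<Longrightarrow> 0 < w j \<and> ln (w j) + w j = \<theta> j - 1"
    and "i \<in> S"
  shows "q i = equilibrium_demand S w i"
proof -
  have feas: "q \<in> feasible \<theta> S" using NE unfolding cournot_NE_def by blast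
  have w_less: "w j < exp (\<theta> j)" if "j \<in> S" for j
    using less_exp_of_ln_add_eq w[OF that] by blast
  have below: "q j \<le> w j * (1 - sum q S)" if "j \<in> S" for j
    using cournot_NE_le_best_response[OF NE \<open>finite S\<close> that] w[OF that] by blast
  have slack: "sum q A < demand_cap \<theta> A" if "A \<subseteq> S" "A \<noteq> {}" for A
    by (rule feasible_slack_below_best_response[OF feas \<open>finite S\<close> _ below that])
      (simp_all add: w w_less less_imp_le)
  have br: "q j = w j * (1 - sum q S)" if "j \<in> S" for j
    using cournot_NE_eq_best_response[OF NE \<open>finite S\<close> that] w[OF that] slack by blast
  have "sum q S = (\<Sum>j\<in>S. w j * (1 - sum q S))"
    using br by (rule sum.cong[OF refl])
  also have "\<dots> = sum w S * (1 - sum q S)"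
    by (simp add: sum_distrib_right)
  finally have "(1 - sum q S) * (1 + sum w S) = 1"
    by (simp add: algebra_simps)
  moreover have "0 \<le> sum w S"
    using w by (simp add: sum_nonneg less_imp_le)
  ultimately have "1 - sum q S = 1 / (1 + sum w S)"
    by (simp add: eq_divide_eq)
  with br[OF \<open>i \<in> S\<close>] show ?thesis by (simp add: equilibrium_demand_def)
qed

lemma revenue_equilibrium_demand:
  assumes "finite S" and w: "\<And>j. j \<in> S \<Longrightarrow> 0 < w j \<and> ln (w j) + w j = \<theta> j - 1"
  shows "revenue \<theta> S (equilibrium_demand S w) = (\<Sum>i\<in>S. w i ^ 2 + w i) / (1 + sum w S)"
proof -
  have "0 \<le> sum w S" using w by (simp add: sum_nonneg less_imp_le)
  then have "revenue \<theta> S (equilibrium_demand S w) = (\<Sum>i\<in>S. (w i ^ 2 + w i) / (1 + sum w S))"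
    unfolding revenue_def using \<open>finite S\<close> w price_equilibrium_demand
    by (intro sum.cong) (auto simp: equilibrium_demand_def power2_eq_square algebra_simps)
  then show ?thesis by (simp add: sum_divide_distrib)
qed

lemma social_welfare_equilibrium_demand:
  assumes "finite S" and w: "\<And>j. j \<in> S \<Longrightarrow> 0 < w j \<and> ln (w j) + w j = \<theta> j - 1"
  shows "social_welfare \<theta> S (equilibrium_demand S w)
    = ln (1 + sum w S) + revenue \<theta> S (equilibrium_demand S w)"
proof -
  have "0 \<le> sum w S" using w by (simp add: sum_nonneg less_imp_le)
  have "exp (\<theta> j - price \<theta> S (equilibrium_demand S w) j) = w j" if "j \<in> S" for j
    using price_equilibrium_demand[OF \<open>finite S\<close> that \<open>0 \<le> sum w S\<close>] w[OF that]
      exp_diff_eq_of_ln_add_eq[of "w j" "\<theta> j - 1"]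
    by (simp add: algebra_simps)
  then show ?thesis
    unfolding social_welfare_def revenue_def by simp
qed

theorem theorem5:
  fixes n :: nat and \<theta> :: "nat \<Rightarrow> real" and S :: "nat set"
  assumes "\<forall>i\<in>{1..n}. \<theta> i \<ge> 0"
    and "S \<subseteq> {1..n}" and "S \<noteq> {}"
  defines "w \<equiv> (\<lambda>i. lambertW (exp (\<theta> i - 1)))"
  defines "qhat \<equiv> (\<lambda>i. w i / (1 + (\<Sum>j\<in>S. w j)))"
  shows "cournot_NE \<theta> S qhat
    \<and> (\<forall>q. cournot_NE \<theta> S q \<longrightarrow> (\<forall>i\<in>S. q i = qhat i))
    \<and> (\<forall>i\<in>S. price \<theta> S qhat i = 1 + w i)
    \<and> social_welfare \<theta> S qhat =
        ln (1 + (\<Sum>i\<in>S. w i)) + (\<Sum>i\<in>S. w i ^ 2 + w i) / (1 + (\<Sum>i\<in>S. w i))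
    \<and> revenue \<theta> S qhat = (\<Sum>i\<in>S. w i ^ 2 + w i) / (1 + (\<Sum>i\<in>S. w i))"
proof -
  have "finite S" using assms(2) finite_subset by blast
  have w: "0 < w j \<and> ln (w j) + w j = \<theta> j - 1" for j
    unfolding w_def using lambertW_pos ln_lambertW_exp by simp
  have "0 \<le> sum w S" using w by (simp add: sum_nonneg less_imp_le)
  have qhat: "qhat = equilibrium_demand S w"
    unfolding qhat_def equilibrium_demand_def ..
  show ?thesis
    unfolding qhat
    using cournot_NE_equilibrium_demand cournot_NE_unique price_equilibrium_demand
      revenue_equilibrium_demand social_welfare_equilibrium_demand
      \<open>finite S\<close> w \<open>0 \<le> sum w S\<close>
    by simp
qed

end
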